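(* Let $N$ be a positive integer and $t>-\log N$. For integers $n\ge N$ let $$\delta_n(t,N)=\int_N^{n+1}\frac{dx}{t+\log x}-\sum_{k=N}^{n}\frac{1}{t+\log(k+\frac12)},$$ and set $\delta_{N-1}(t,N)=0$. (1) The sequence $(\delta_n(t,N))_{n\ge N}$ is positive, strictly increasing and bounded above; hence $\delta(t,N)=\lim_{n\to\infty}\delta_n(t,N)>0$ exists. (2) For all $n\ge N$, $\delta(t,N)-\delta_{n-1}(t,N)=\delta(t,n)$ and $$\frac{1}{24(n+1)(t+\log(n+1))^2}\le\delta(t,n)\le\frac{1}{24(n+\frac12)(t+\log(n+\frac12))^2}+\frac{1}{24n^2(t+\log n)^2}+\frac{1}{12n^2(t+\log n)^3}.$$ (3) $\delta(t,N)=\delta_{n-1}(t,N)+\frac{1+o(1)}{24n(\log n)^2}$ as $n\to\infty$, and $\delta(t,N)=O\!\left(\frac1{Nt^2}\right)$ as $t\to\infty$, with implied constant independent of $N$. *)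

theory Defs
  imports "HOL-Analysis.Analysis" "HOL-Library.Landau_Symbols"
begin

text \<open>delta_n(t,N) for n >= N; for n = N - 1 the formula gives 0 automatically
  (empty sum, integral over the degenerate interval [N,N]).\<close>
definition delta_seq :: "real \<Rightarrow> nat \<Rightarrow> nat \<Rightarrow> real" where
  "delta_seq t N n =
     integral {real N..real (n+1)} (\<lambda>x. 1 / (t + ln x))
     - (\<Sum>k=N..n. 1 / (t + ln (real k + 1/2)))"

definition delta :: "real \<Rightarrow> nat \<Rightarrow> real" where
  "delta t N = lim (\<lambda>n. delta_seq t N n)"

end

theory Submission
  imports Defs "HOL-Real_Asymp.Real_Asymp"
begin

text \<open>Let f(x) = 1/(t + ln x) for x > exp(-t). Then delta_n is a sum of midpoint-rule errors
  e_k = (integral of f over [k, k+1]) - f(k + 1/2). Taylor expansion of an antiderivative of f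
  about k + 1/2 gives e_k = (f''(\<xi>) + f''(\<eta>))/48 with \<xi>, \<eta> \<in> [k, k+1]; since f'' is positive
  and decreasing, f''(k+1)/24 \<le> e_k \<le> f''(k)/24, so delta_n increases to delta = \<Sum> e_k.
  The bounds on the tail sum of the e_k over k \<ge> n telescope: f''(k+1) \<ge> f'(k+2) - f'(k+1) by
  the mean value theorem, and f''(k) \<le> f'(k+1/2) - f'(k-1/2) by the same symmetric Taylor
  expansion applied to f', because f'''' > 0. As f' tends to 0, the tails are squeezed between
  -f'(n+1)/24 and f''(n)/24 - f'(n+1/2)/24, both asymptotic to 1/(24 n (ln n)^2) and of order
  1/(n t^2).\<close>

lemma taylor_symmetric_difference:
  fixes g g' g'' g''' :: "real \<Rightarrow> real"
  assumes "0 < h"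
    and "\<And>y. y \<in> {c-h..c+h} \<Longrightarrow> (g has_real_derivative g' y) (at y)"
    and "\<And>y. y \<in> {c-h..c+h} \<Longrightarrow> (g' has_real_derivative g'' y) (at y)"
    and "\<And>y. y \<in> {c-h..c+h} \<Longrightarrow> (g'' has_real_derivative g''' y) (at y)"
  shows "\<exists>z1\<in>{c-h..c+h}. \<exists>z2\<in>{c-h..c+h}.
           g (c+h) - g (c-h) = 2*h * g' c + h^3/6 * (g''' z1 + g''' z2)"
proof -
  define diff where "diff m = [g, g', g'', g'''] ! m" for m :: nat
  have derivs: "\<forall>m y. m < 3 \<and> c - h \<le> y \<and> y \<le> c + h \<longrightarrow>
                  (diff m has_real_derivative diff (Suc m) y) (at y)"
    using assms(2-4) by (auto simp: diff_def less_Suc_eq numeral_3_eq_3)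
  have taylor: "(\<Sum>m<3. diff m c / fact m * x^m) = g c + g' c * x + g'' c / 2 * x^2" for x
    by (simp add: diff_def numeral_3_eq_3 eval_nat_numeral)
  obtain z1 where z1: "c < z1" "z1 < c + h"
      "g (c+h) = (\<Sum>m<3. diff m c / fact m * ((c+h) - c)^m) + diff 3 z1 / fact 3 * ((c+h) - c)^3"
    using Taylor[of 3 diff g "c-h" "c+h" c "c+h"] derivs \<open>0 < h\<close> by (auto simp: diff_def)
  obtain z2 where z2: "c - h < z2" "z2 < c"
      "g (c-h) = (\<Sum>m<3. diff m c / fact m * ((c-h) - c)^m) + diff 3 z2 / fact 3 * ((c-h) - c)^3"
    using Taylor[of 3 diff g "c-h" "c+h" c "c-h"] derivs \<open>0 < h\<close> by (auto simp: diff_def)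
  have "g (c+h) - g (c-h) = 2*h * g' c + h^3/6 * (g''' z1 + g''' z2)"
    unfolding z1(3) z2(3) taylor by (simp add: diff_def fact_numeral field_simps eval_nat_numeral)
  with z1 z2 show ?thesis by force
qed

lemma taylor_symmetric_difference_ge:
  fixes g g' g'' g''' :: "real \<Rightarrow> real"
  assumes "0 < h"
    and "\<And>y. y \<in> {c-h..c+h} \<Longrightarrow> (g has_real_derivative g' y) (at y)"
    and "\<And>y. y \<in> {c-h..c+h} \<Longrightarrow> (g' has_real_derivative g'' y) (at y)"
    and "\<And>y. y \<in> {c-h..c+h} \<Longrightarrow> (g'' has_real_derivative g''' y) (at y)"
    and "\<And>y. y \<in> {c-h..c+h} \<Longrightarrow> 0 \<le> g''' y"
  shows "2*h * g' c \<le> g (c+h) - g (c-h)"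
proof -
  obtain z1 z2 where "z1 \<in> {c-h..c+h}" "z2 \<in> {c-h..c+h}"
    and eq: "g (c+h) - g (c-h) = 2*h * g' c + h^3/6 * (g''' z1 + g''' z2)"
    using taylor_symmetric_difference[OF assms(1-4)] by blast
  then have "0 \<le> h^3/6 * (g''' z1 + g''' z2)"
    using assms(1,5) by (intro mult_nonneg_nonneg add_nonneg_nonneg) auto
  with eq show ?thesis by linarith
qed

lemma midpoint_rule_error_bounds:
  fixes f f' f'' :: "real \<Rightarrow> real"
  assumes "0 < h" "a < c - h" "c + h < b"
    and f': "\<And>y. a < y \<Longrightarrow> y < b \<Longrightarrow> (f has_real_derivative f' y) (at y)"
    and f'': "\<And>y. a < y \<Longrightarrow> y < b \<Longrightarrow> (f' has_real_derivative f'' y) (at y)"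
    and antitone: "\<And>y. y \<in> {c-h..c+h} \<Longrightarrow> f'' (c+h) \<le> f'' y \<and> f'' y \<le> f'' (c-h)"
  shows "h^3/3 * f'' (c+h) \<le> integral {c-h..c+h} f - 2*h * f c"
    and "integral {c-h..c+h} f - 2*h * f c \<le> h^3/3 * f'' (c-h)"
proof -
  \<comment> \<open>Taylor's theorem needs two-sided derivatives of the antiderivative F at c \<plusminus> h,
    so F is based at a point a' strictly between a and c - h.\<close>
  define a' b' where "a' = (a + (c - h)) / 2" and "b' = (b + (c + h)) / 2"
  have cont: "continuous_on {a'..b'} f"
  proof (intro continuous_at_imp_continuous_on ballI)
    fix y assume "y \<in> {a'..b'}"
    then have "a < y" "y < b" using assms(2,3) by (simp_all add: a'_def b'_def)
    then show "isCont f y" using f' DERIV_isCont by blast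
  qed
  define F where "F y = integral {a'..y} f" for y
  have F': "(F has_real_derivative f y) (at y)" if "y \<in> {c-h..c+h}" for y
  proof -
    have y: "y \<in> interior {a'..b'}" using that assms(2,3) by (simp add: a'_def b'_def)
    from integral_has_real_derivative[OF cont interior_subset[THEN subsetD, OF y]]
    show ?thesis unfolding F_def at_within_interior[OF y] .
  qed
  have "a < y \<and> y < b" if "y \<in> {c-h..c+h}" for y
    using that assms(2,3) by simp
  then obtain z1 z2 where z: "z1 \<in> {c-h..c+h}" "z2 \<in> {c-h..c+h}"
    and eq: "F (c+h) - F (c-h) = 2*h * f c + h^3/6 * (f'' z1 + f'' z2)"
    using taylor_symmetric_difference[where g''=f' and g'''=f'', OF \<open>0 < h\<close> F'] f' f'' by blast
  have "integral {a'..c-h} f + integral {c-h..c+h} f = integral {a'..c+h} f"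
  proof (rule Henstock_Kurzweil_Integration.integral_combine)
    show "f integrable_on {a'..c+h}"
      using assms(3) by (intro integrable_continuous_interval continuous_on_subset[OF cont])
        (simp add: b'_def)
  qed (use assms(1,2) in \<open>simp_all add: a'_def\<close>)
  with eq have error: "integral {c-h..c+h} f - 2*h * f c = h^3/6 * (f'' z1 + f'' z2)"
    by (simp add: F_def)
  have "2 * f'' (c+h) \<le> f'' z1 + f'' z2" "f'' z1 + f'' z2 \<le> 2 * f'' (c-h)"
    using antitone[OF z(1)] antitone[OF z(2)] by linarith+
  then have "h^3/6 * (2 * f'' (c+h)) \<le> h^3/6 * (f'' z1 + f'' z2)"
    and "h^3/6 * (f'' z1 + f'' z2) \<le> h^3/6 * (2 * f'' (c-h))"
    using \<open>0 < h\<close> by (simp_all add: mult_left_mono)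
  then show "h^3/3 * f'' (c+h) \<le> integral {c-h..c+h} f - 2*h * f c"
    and "integral {c-h..c+h} f - 2*h * f c \<le> h^3/3 * f'' (c-h)"
    unfolding error by (simp_all add: mult_ac)
qed

lemma exp_minus_less_iff: "exp (-t) < (x::real) \<longleftrightarrow> 0 < x \<and> 0 < t + ln x"
proof (cases "0 < x")
  case True
  then have "exp (-t) < x \<longleftrightarrow> ln (exp (-t)) < ln x"
    by (metis ln_less_cancel_iff exp_gt_zero)
  with True show ?thesis by auto
next
  case False
  then show ?thesis by (meson exp_gt_zero order.strict_trans)
qed

lemma has_real_derivative_power_log_quotient:
  fixes c t x :: real and j k :: nat
  assumes "0 < x" "0 < t + ln x"
  shows "((\<lambda>y. c / (y^j * (t + ln y)^k)) has_real_derivative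
           - c * j / (x^Suc j * (t + ln x)^k) - c * k / (x^Suc j * (t + ln x)^Suc k)) (at x)"
proof -
  define u where "u = t + ln x"
  have "u > 0" using assms by (simp add: u_def)
  have "((\<lambda>y. c / (y^j * (t + ln y)^k)) has_real_derivative
         - c * (j * x^(j-1) * u^k + x^j * (k * u^(k-1) * (1/x))) / (x^j * u^k)^2) (at x)"
    using assms unfolding u_def by (auto intro!: derivative_eq_intros simp: power2_eq_square)
  moreover have "- c * (j * x^(j-1) * u^k + x^j * (k * u^(k-1) * (1/x))) / (x^j * u^k)^2
     = - c * j / (x^Suc j * u^k) - c * k / (x^Suc j * u^Suc k)"
    using \<open>u > 0\<close> \<open>x > 0\<close> by (cases j; cases k) (simp_all add: field_simps power2_eq_square)
  ultimately show ?thesis by (simp add: u_def)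
qed

definition recip_log :: "real \<Rightarrow> real \<Rightarrow> real" where
  "recip_log t = (\<lambda>x. 1 / (t + ln x))"

definition recip_log_d1 :: "real \<Rightarrow> real \<Rightarrow> real" where
  "recip_log_d1 t x = - 1 / (x * (t + ln x)^2)"

definition recip_log_d2 :: "real \<Rightarrow> real \<Rightarrow> real" where
  "recip_log_d2 t x = 1 / (x^2 * (t + ln x)^2) + 2 / (x^2 * (t + ln x)^3)"

definition recip_log_d3 :: "real \<Rightarrow> real \<Rightarrow> real" where
  "recip_log_d3 t x = - (2 / (x^3 * (t + ln x)^2) + 6 / (x^3 * (t + ln x)^3)
     + 6 / (x^3 * (t + ln x)^4))"

definition recip_log_d4 :: "real \<Rightarrow> real \<Rightarrow> real" where
  "recip_log_d4 t x = 6 / (x^4 * (t + ln x)^2) + 22 / (x^4 * (t + ln x)^3)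
     + 36 / (x^4 * (t + ln x)^4) + 24 / (x^4 * (t + ln x)^5)"

lemma recip_log_has_derivative:
  "exp (-t) < x \<Longrightarrow> (recip_log t has_real_derivative recip_log_d1 t x) (at x)"
  unfolding recip_log_def recip_log_d1_def exp_minus_less_iff
  by (auto intro!: derivative_eq_intros simp: power2_eq_square field_simps)

lemma recip_log_d1_has_derivative:
  "exp (-t) < x \<Longrightarrow> (recip_log_d1 t has_real_derivative recip_log_d2 t x) (at x)"
  unfolding exp_minus_less_iff
  using has_real_derivative_power_log_quotient[of x t "-1" 1 2]
  by (simp add: recip_log_d1_def[abs_def] recip_log_d2_def numeral_eq_Suc)

lemma recip_log_d2_has_derivative:
  "exp (-t) < x \<Longrightarrow> (recip_log_d2 t has_real_derivative recip_log_d3 t x) (at x)"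
  unfolding recip_log_d2_def recip_log_d3_def exp_minus_less_iff
  by (rule DERIV_cong[OF DERIV_add[OF has_real_derivative_power_log_quotient
        has_real_derivative_power_log_quotient]])
     (simp_all add: numeral_eq_Suc diff_divide_distrib add_divide_distrib[symmetric])

lemma recip_log_d3_has_derivative:
  "exp (-t) < x \<Longrightarrow> (recip_log_d3 t has_real_derivative recip_log_d4 t x) (at x)"
  unfolding recip_log_d3_def recip_log_d4_def exp_minus_less_iff
  by (rule DERIV_cong[OF DERIV_minus[OF DERIV_add[OF DERIV_add[OF
        has_real_derivative_power_log_quotient has_real_derivative_power_log_quotient]
        has_real_derivative_power_log_quotient]]])
     (simp_all add: numeral_eq_Suc diff_divide_distrib add_divide_distrib[symmetric])

lemma recip_log_d2_pos: "exp (-t) < x \<Longrightarrow> 0 < recip_log_d2 t x"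
  unfolding recip_log_d2_def exp_minus_less_iff by (auto intro!: add_pos_pos divide_pos_pos)

lemma recip_log_d3_neg: "exp (-t) < x \<Longrightarrow> recip_log_d3 t x < 0"
  unfolding recip_log_d3_def exp_minus_less_iff neg_less_0_iff_less
  by (auto intro!: add_pos_pos divide_pos_pos)

lemma recip_log_d4_pos: "exp (-t) < x \<Longrightarrow> 0 < recip_log_d4 t x"
  unfolding recip_log_d4_def exp_minus_less_iff by (auto intro!: add_pos_pos divide_pos_pos)

lemma recip_log_d2_antimono:
  assumes "exp (-t) < x" "x \<le> y"
  shows "recip_log_d2 t y \<le> recip_log_d2 t x"
proof (rule DERIV_nonpos_imp_nonincreasing[OF \<open>x \<le> y\<close>])
  fix z assume "x \<le> z" "z \<le> y"
  with assms(1) have "exp (-t) < z" by linarith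
  then show "\<exists>d. (recip_log_d2 t has_real_derivative d) (at z) \<and> d \<le> 0"
    using recip_log_d2_has_derivative recip_log_d3_neg less_imp_le by blast
qed

lemma recip_log_continuous_on:
  "exp (-t) < a \<Longrightarrow> continuous_on {a..b} (recip_log t)"
  by (intro continuous_at_imp_continuous_on ballI DERIV_isCont[OF recip_log_has_derivative])
    auto

definition cell_error :: "real \<Rightarrow> real \<Rightarrow> real" where
  "cell_error t x = integral {x..x+1} (recip_log t) - recip_log t (x + 1/2)"

lemma cell_error_bounds:
  assumes "exp (-t) < x"
  shows "recip_log_d2 t (x+1) / 24 \<le> cell_error t x"
    and "cell_error t x \<le> recip_log_d2 t x / 24"
proof -
  let ?c = "x + 1/2" and ?h = "1/2 :: real"
  have derivs: "(recip_log t has_real_derivative recip_log_d1 t y) (at y)"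
      "(recip_log_d1 t has_real_derivative recip_log_d2 t y) (at y)" if "exp (-t) < y" for y
    using that recip_log_has_derivative recip_log_d1_has_derivative by blast+
  have "recip_log_d2 t (?c + ?h) \<le> recip_log_d2 t y \<and> recip_log_d2 t y \<le> recip_log_d2 t (?c - ?h)"
    if "y \<in> {?c - ?h..?c + ?h}" for y
    using that assms by (auto intro!: recip_log_d2_antimono)
  from midpoint_rule_error_bounds[where f'' = "recip_log_d2 t", OF _ _ _ derivs this, of "exp (-t)" "x + 2"]
  show "recip_log_d2 t (x+1) / 24 \<le> cell_error t x" "cell_error t x \<le> recip_log_d2 t x / 24"
    using assms by (simp_all add: cell_error_def power3_eq_cube add.commute)
qed

lemma cell_error_pos: "exp (-t) < x \<Longrightarrow> 0 < cell_error t x"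
  using cell_error_bounds(1)[of t x] recip_log_d2_pos[of t "x+1"] by simp

lemma recip_log_d1_diff_le:
  assumes "exp (-t) < x"
  shows "recip_log_d1 t (x+1) - recip_log_d1 t x \<le> recip_log_d2 t x"
proof -
  obtain z where "x < z" "z < x + 1"
    and "recip_log_d1 t (x+1) - recip_log_d1 t x = (x + 1 - x) * recip_log_d2 t z"
    using MVT2[of x "x+1" "recip_log_d1 t" "recip_log_d2 t"] recip_log_d1_has_derivative assms
    by auto
  with recip_log_d2_antimono[OF assms, of z] show ?thesis by simp
qed

lemma recip_log_d2_le_d1_diff:
  assumes "exp (-t) < x - 1/2"
  shows "recip_log_d2 t x \<le> recip_log_d1 t (x + 1/2) - recip_log_d1 t (x - 1/2)"
proof -
  have dom: "exp (-t) < y" if "y \<in> {x - 1/2..x + 1/2}" for y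
    using that assms by simp
  have "2 * (1/2) * recip_log_d2 t x \<le> recip_log_d1 t (x + 1/2) - recip_log_d1 t (x - 1/2)"
    by (rule taylor_symmetric_difference_ge[where g'' = "recip_log_d3 t" and g''' = "recip_log_d4 t"])
      (simp_all add: dom recip_log_d1_has_derivative recip_log_d2_has_derivative
        recip_log_d3_has_derivative recip_log_d4_pos less_imp_le)
  then show ?thesis by simp
qed

lemma cell_error_ge_telescoping:
  assumes "exp (-t) < real n"
  shows "(recip_log_d1 t (real (Suc j) + (n + 1)) - recip_log_d1 t (real j + (n + 1))) / 24
           \<le> cell_error t (real (n + j))"
proof -
  let ?x = "real (n + j)"
  have x: "exp (-t) < ?x" using assms by simp
  with cell_error_bounds(1)[OF x] recip_log_d1_diff_le[of t "?x + 1"] show ?thesis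
    by (simp add: add_ac)
qed

lemma cell_error_le_telescoping:
  assumes "exp (-t) < real n"
  shows "cell_error t (real (n + Suc j))
           \<le> (recip_log_d1 t (real (Suc j) + (n + 1/2)) - recip_log_d1 t (real j + (n + 1/2))) / 24"
proof -
  let ?x = "real (n + Suc j)"
  have x: "exp (-t) < ?x - 1/2" using assms by simp
  with cell_error_bounds(2)[of t ?x] recip_log_d2_le_d1_diff[OF x] show ?thesis
    by (simp add: add_ac)
qed

lemma recip_log_d1_telescope_sums:
  "(\<lambda>j. (recip_log_d1 t (real (Suc j) + c) - recip_log_d1 t (real j + c)) / 24)
     sums (- recip_log_d1 t c / 24)"
proof -
  have "(\<lambda>j. recip_log_d1 t (real j + c) / 24) \<longlonglongrightarrow> 0"
    unfolding recip_log_d1_def by real_asymp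
  from telescope_sums[OF this] show ?thesis by (simp add: diff_divide_distrib)
qed

lemma summable_cell_error:
  assumes "exp (-t) < real n"
  shows "summable (\<lambda>j. cell_error t (real (n + j)))"
proof -
  \<comment> \<open>The comparison starts at j = 1: for j = 0 the telescoping bound needs exp(-t) < n - 1/2.\<close>
  have "summable (\<lambda>j. cell_error t (real (n + Suc j)))"
  proof (rule summable_comparison_test')
    show "summable (\<lambda>j. (recip_log_d1 t (real (Suc j) + (n + 1/2))
                         - recip_log_d1 t (real j + (n + 1/2))) / 24)"
      using recip_log_d1_telescope_sums by (rule sums_summable)
    fix j :: nat
    show "norm (cell_error t (real (n + Suc j)))
        \<le> (recip_log_d1 t (real (Suc j) + (n + 1/2)) - recip_log_d1 t (real j + (n + 1/2))) / 24"
      using cell_error_le_telescoping[OF assms] cell_error_pos[of t "real (n + Suc j)"] assms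
      by simp
  qed
  then show ?thesis using summable_Suc_iff[of "\<lambda>j. cell_error t (real (n + j))"] by simp
qed

lemma delta_seq_eq_sum:
  assumes "exp (-t) < real N"
  shows "delta_seq t N n = (\<Sum>k=N..n. cell_error t (real k))"
proof (induction n)
  case 0
  have "1 \<le> N" using assms exp_gt_zero[of "-t"] by linarith
  then show ?case by (cases "N = 1") (simp_all add: delta_seq_def)
next
  case (Suc n)
  show ?case
  proof (cases "N \<le> Suc n")
    case False
    then have "integral {real N..real (Suc n + 1)} (\<lambda>x. 1 / (t + ln x)) = 0"
      by (intro integral_null[of "real N", unfolded cbox_interval]) (simp add: content_real_eq_0)
    with False show ?thesis by (simp add: delta_seq_def)
  next
    case True
    have "integral {real N..real (n+1)} (recip_log t) + integral {real (n+1)..real (n+1) + 1} (recip_log t)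
            = integral {real N..real (n+1) + 1} (recip_log t)"
      using True assms
      by (intro Henstock_Kurzweil_Integration.integral_combine integrable_continuous_interval
          recip_log_continuous_on) simp_all
    then have "delta_seq t N (Suc n) = delta_seq t N n + cell_error t (real (Suc n))"
      using True by (simp add: delta_seq_def cell_error_def recip_log_def add_ac)
    with True Suc.IH show ?thesis by simp
  qed
qed

lemma delta_seq_Suc:
  assumes "exp (-t) < real N"
  shows "delta_seq t N (Suc n)
           = delta_seq t N n + (if N \<le> Suc n then cell_error t (real (Suc n)) else 0)"
  by (simp add: delta_seq_eq_sum[OF assms])

lemma mono_delta_seq:
  assumes "exp (-t) < real N"
  shows "mono (delta_seq t N)"
  unfolding mono_iff_le_Suc
proof
  fix n
  have "N \<le> Suc n \<Longrightarrow> 0 < cell_error t (real (Suc n))"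
    using assms by (intro cell_error_pos) linarith
  then show "delta_seq t N n \<le> delta_seq t N (Suc n)"
    by (simp add: delta_seq_Suc[OF assms] less_imp_le)
qed

lemma delta_seq_pos:
  assumes "exp (-t) < real N" "N \<le> n"
  shows "0 < delta_seq t N n"
  unfolding delta_seq_eq_sum[OF assms(1)] using assms
  by (intro sum_pos cell_error_pos) auto

lemma delta_seq_tendsto_delta:
  assumes "exp (-t) < real n"
  shows "delta_seq t n \<longlonglongrightarrow> delta t n"
    and "(\<lambda>j. cell_error t (real (n + j))) sums delta t n"
proof -
  let ?e = "\<lambda>j. cell_error t (real (n + j))"
  have "(\<lambda>m. \<Sum>j<Suc m. ?e j) \<longlonglongrightarrow> suminf ?e"
    using summable_LIMSEQ[OF summable_cell_error[OF assms]] by (rule LIMSEQ_Suc)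
  moreover have "(\<Sum>j<Suc m. ?e j) = delta_seq t n (m + n)" for m
    using sum.shift_bounds_cl_nat_ivl[of "\<lambda>k. cell_error t (real k)" 0 n m]
    by (simp add: delta_seq_eq_sum[OF assms] atLeast0AtMost lessThan_Suc_atMost add.commute)
  ultimately have "delta_seq t n \<longlonglongrightarrow> suminf ?e"
    by (simp add: LIMSEQ_offset)
  moreover from this have "delta t n = suminf ?e"
    unfolding delta_def by (rule limI)
  ultimately show "delta_seq t n \<longlonglongrightarrow> delta t n" and "?e sums delta t n"
    using summable_sums[OF summable_cell_error[OF assms]] by simp_all
qed

lemma delta_pos:
  assumes "exp (-t) < real n"
  shows "0 < delta t n"
  using sums_unique[OF delta_seq_tendsto_delta(2)[OF assms]] summable_cell_error[OF assms]
    cell_error_pos assms by (auto intro!: suminf_pos)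

lemma delta_lower_bound:
  assumes "exp (-t) < real n"
  shows "1 / (24 * (real n + 1) * (t + ln (real n + 1))^2) \<le> delta t n"
proof -
  have "- recip_log_d1 t (real n + 1) / 24 \<le> delta t n"
    using sums_le[OF cell_error_ge_telescoping[OF assms] recip_log_d1_telescope_sums
      delta_seq_tendsto_delta(2)[OF assms]] by (simp add: add_ac)
  then show ?thesis by (simp add: recip_log_d1_def algebra_simps)
qed

lemma delta_upper_bound:
  assumes "exp (-t) < real n"
  shows "delta t n \<le> 1 / (24 * (real n + 1/2) * (t + ln (real n + 1/2))^2)
                      + 1 / (24 * (real n)^2 * (t + ln (real n))^2)
                      + 1 / (12 * (real n)^2 * (t + ln (real n))^3)"
proof -
  have "(\<lambda>j. cell_error t (real (n + Suc j))) sums (delta t n - cell_error t (real n))"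
    using delta_seq_tendsto_delta(2)[OF assms] sums_Suc_iff[of "\<lambda>j. cell_error t (real (n + j))"]
    by simp
  then have "delta t n - cell_error t (real n) \<le> - recip_log_d1 t (real n + 1/2) / 24"
    using sums_le[OF cell_error_le_telescoping[OF assms] _ recip_log_d1_telescope_sums] by simp
  moreover have "cell_error t (real n) \<le> recip_log_d2 t (real n) / 24"
    by (rule cell_error_bounds(2)[OF assms])
  ultimately have "delta t n \<le> recip_log_d2 t (real n) / 24 - recip_log_d1 t (real n + 1/2) / 24"
    by linarith
  also have "\<dots> = 1 / (24 * (real n + 1/2) * (t + ln (real n + 1/2))^2)
                   + 1 / (24 * (real n)^2 * (t + ln (real n))^2)
                   + 1 / (12 * (real n)^2 * (t + ln (real n))^3)"
    by (simp add: recip_log_d1_def recip_log_d2_def field_simps)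
  finally show ?thesis .
qed

lemma delta_eq_delta_minus_delta_seq:
  assumes "exp (-t) < real N" "N \<le> n"
  shows "delta t N - delta_seq t N (n - 1) = delta t n"
proof -
  define m where "m = n - N"
  let ?e = "\<lambda>j. cell_error t (real (N + j))"
  have N: "1 \<le> N" using assms(1) exp_gt_zero[of "-t"] by linarith
  have "delta t N = (\<Sum>j. ?e (j + m)) + (\<Sum>j<m. ?e j)"
    using sums_unique[OF delta_seq_tendsto_delta(2)[OF assms(1)]]
      suminf_split_initial_segment[OF summable_cell_error[OF assms(1)]] by simp
  moreover have "(\<Sum>j. ?e (j + m)) = delta t n"
    using sums_unique[OF delta_seq_tendsto_delta(2), of t n] assms
    by (simp add: m_def add.commute add.left_commute)
  moreover have "(\<Sum>j<m. ?e j) = delta_seq t N (n - 1)"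
  proof -
    have "{N..n - 1} = {0 + N..<m + N}" using N assms(2) by (auto simp: m_def)
    then show ?thesis
      using sum.shift_bounds_nat_ivl[of "\<lambda>k. cell_error t (real k)" 0 N m]
      by (simp add: delta_seq_eq_sum[OF assms(1)] atLeast0LessThan add.commute)
  qed
  ultimately show ?thesis by simp
qed

lemma delta_le_inverse_square:
  assumes "1 \<le> M" "1 \<le> s"
  shows "\<bar>delta s M\<bar> \<le> 1 / (6 * real M * s^2)"
proof -
  have M: "0 < real M" using assms(1) by simp
  have s: "0 < s" using assms(2) by simp
  have "exp (-s) < 1" using s by simp
  then have dom: "exp (-s) < real M" using assms(1) by linarith
  have ln_M: "0 \<le> ln (real M)" and ln_M': "0 \<le> ln (real M + 1/2)" using assms(1) by simp_all
  have "real M \<le> (real M)^2" using assms(1) by (simp add: power2_eq_square)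
  have "1 / (24 * (real M + 1/2) * (s + ln (real M + 1/2))^2) \<le> 1 / (24 * real M * s^2)"
    using M s ln_M' by (intro frac_le mult_mono power_mono) auto
  moreover have "1 / (24 * (real M)^2 * (s + ln (real M))^2) \<le> 1 / (24 * real M * s^2)"
    using M s ln_M \<open>real M \<le> (real M)^2\<close> by (intro frac_le mult_mono power_mono) auto
  moreover have "1 / (12 * (real M)^2 * (s + ln (real M))^3) \<le> 1 / (12 * real M * s^2)"
  proof (intro frac_le mult_mono)
    have "s^2 \<le> s^3" using assms(2) by (simp add: power_increasing)
    also have "\<dots> \<le> (s + ln (real M))^3" using s ln_M by (intro power_mono) auto
    finally show "s^2 \<le> (s + ln (real M))^3" .
  qed (use M s ln_M \<open>real M \<le> (real M)^2\<close> in auto)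
  ultimately show ?thesis
    using delta_upper_bound[OF dom] delta_pos[OF dom] by (simp add: field_simps)
qed

lemma delta_asymp_equiv:
  "(\<lambda>n. delta t n) \<sim>[sequentially] (\<lambda>n. 1 / (24 * real n * (ln (real n))^2))"
proof (rule asymp_equiv_sandwich_real)
  show "(\<lambda>n::nat. 1 / (24 * (real n + 1) * (t + ln (real n + 1))^2))
          \<sim>[sequentially] (\<lambda>n. 1 / (24 * real n * (ln (real n))^2))"
    by real_asymp
  show "(\<lambda>n::nat. 1 / (24 * (real n + 1/2) * (t + ln (real n + 1/2))^2)
          + 1 / (24 * (real n)^2 * (t + ln (real n))^2) + 1 / (12 * (real n)^2 * (t + ln (real n))^3))
          \<sim>[sequentially] (\<lambda>n. 1 / (24 * real n * (ln (real n))^2))"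
    by real_asymp
  have "\<forall>\<^sub>F n in sequentially. exp (-t) < real n"
    by real_asymp
  then show "\<forall>\<^sub>F n in sequentially. delta t n \<in>
      {1 / (24 * (real n + 1) * (t + ln (real n + 1))^2) ..
       1 / (24 * (real n + 1/2) * (t + ln (real n + 1/2))^2)
         + 1 / (24 * (real n)^2 * (t + ln (real n))^2) + 1 / (12 * (real n)^2 * (t + ln (real n))^3)}"
    by eventually_elim (metis atLeastAtMost_iff delta_lower_bound delta_upper_bound)
qed

theorem proposition3p6:
  fixes t :: real and N :: nat
  assumes "N \<ge> 1" and "t > - ln (real N)"
  shows
    "(\<forall>n\<ge>N. delta_seq t N n > 0)
     \<and> (\<forall>n\<ge>N. delta_seq t N n < delta_seq t N (Suc n))
     \<and> (\<exists>B. \<forall>n\<ge>N. delta_seq t N n \<le> B)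
     \<and> (\<lambda>n. delta_seq t N n) \<longlonglongrightarrow> delta t N
     \<and> delta t N > 0
     \<and> (\<forall>n\<ge>N.
          delta t N - delta_seq t N (n - 1) = delta t n
          \<and> 1 / (24 * (real n + 1) * (t + ln (real n + 1))^2) \<le> delta t n
          \<and> delta t n \<le> 1 / (24 * (real n + 1/2) * (t + ln (real n + 1/2))^2)
                        + 1 / (24 * (real n)^2 * (t + ln (real n))^2)
                        + 1 / (12 * (real n)^2 * (t + ln (real n))^3))
     \<and> (\<lambda>n. delta t N - delta_seq t N (n - 1))
          \<sim>[sequentially] (\<lambda>n. 1 / (24 * real n * (ln (real n))^2))
     \<and> (\<exists>C. \<forall>M::nat. M \<ge> 1 \<longrightarrow>
          (\<forall>\<^sub>F s in at_top. \<bar>delta s M\<bar> \<le> C * (1 / (real M * s^2))))"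
proof -
  have dom: "exp (-t) < real N" using assms by (simp add: exp_minus_less_iff)
  have dom_n: "exp (-t) < real n" if "N \<le> n" for n using dom that by linarith
  have "delta_seq t N n < delta_seq t N (Suc n)" if "N \<le> n" for n
    using that cell_error_pos[OF dom_n, of "Suc n"] by (simp add: delta_seq_Suc[OF dom])
  moreover have "delta_seq t N n \<le> delta t N" for n
    using incseq_le[OF mono_delta_seq[OF dom] delta_seq_tendsto_delta(1)[OF dom]] .
  moreover have "\<forall>\<^sub>F n in sequentially. delta t n = delta t N - delta_seq t N (n - 1)"
    using eventually_ge_at_top[of N]
    by eventually_elim (rule delta_eq_delta_minus_delta_seq[OF dom, symmetric])
  then have "(\<lambda>n. delta t N - delta_seq t N (n - 1))
      \<sim>[sequentially] (\<lambda>n. 1 / (24 * real n * (ln (real n))^2))"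
    by (rule asymp_equiv_transfer[OF delta_asymp_equiv _ always_eventually[OF allI[OF refl]]])
  moreover have "\<forall>\<^sub>F s in at_top. \<bar>delta s M\<bar> \<le> 1/6 * (1 / (real M * s^2))" if "1 \<le> M" for M
    using eventually_ge_at_top[of "1::real"]
    by eventually_elim (use delta_le_inverse_square[OF that] in \<open>simp add: mult.assoc\<close>)
  ultimately show ?thesis
    using delta_seq_pos[OF dom] delta_seq_tendsto_delta(1)[OF dom] delta_pos[OF dom]
      delta_eq_delta_minus_delta_seq[OF dom] delta_lower_bound[OF dom_n] delta_upper_bound[OF dom_n]
    by blast
qed

end
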